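(* Let $1<\beta<2$ and let $r^{(\beta)}_k$ ($k\in\mathbb{Z}$) be as defined in the context. Then $$\sum_{k=0}^{m}r^{(\beta)}_{j-k}>0\quad\text{for all } m\ge2,\ 1\le j\le m-1,$$ and $$\sum_{k=1-m}^{m-1}r^{(\beta)}_{k}>\frac{c^{(\beta)}_{\ast}}{m^{\beta}}>0\quad\text{for all } m\ge2,$$ where $c^{(\beta)}_{\ast}=\frac{(1-\beta)(2-\beta)(3-\beta)4^{\beta}e^{-9/4}\Psi_\beta}{3}$ and $\Psi_\beta=\frac{1}{2\cos(\pi\beta/2)}$.
   Context: Let $g^{(\beta)}_k=(-1)^k\binom{\beta}{k}$ for $k\ge0$ (equivalently $g^{(\beta)}_0=1$, $g^{(\beta)}_k=(1-\frac{\beta+1}{k})g^{(\beta)}_{k-1}$). Let $\Psi_\beta=\frac{1}{2\cos(\pi\beta/2)}$ and define $r^{(\beta)}_0=2\Psi_\beta\big(\frac{\beta}{2}g^{(\beta)}_1+\frac{2-\beta}{2}g^{(\beta)}_0\big)$, $r^{(\beta)}_1=\Psi_\beta\big(\frac{\beta}{2}g^{(\beta)}_0+\frac{2-\beta}{2}g^{(\beta)}_1+\frac{\beta}{2}g^{(\beta)}_2\big)$, $r^{(\beta)}_k=\Psi_\beta\big(\frac{\beta}{2}g^{(\beta)}_{k+1}+\frac{2-\beta}{2}g^{(\beta)}_k\big)$ for $k\ge2$, and $r^{(\beta)}_{-k}=r^{(\beta)}_k$ for $k\ge1$. *)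

theory Defs
  imports Complex_Main
begin

definition gcoef :: "real \<Rightarrow> nat \<Rightarrow> real" where
  "gcoef \<beta> k = (-1) ^ k * (\<beta> gchoose k)"

definition Psi :: "real \<Rightarrow> real" where
  "Psi \<beta> = 1 / (2 * cos (pi * \<beta> / 2))"

definition rnat :: "real \<Rightarrow> nat \<Rightarrow> real" where
  "rnat \<beta> k =
     (if k = 0 then 2 * Psi \<beta> * (\<beta> / 2 * gcoef \<beta> 1 + (2 - \<beta>) / 2 * gcoef \<beta> 0)
      else if k = 1 then Psi \<beta> * (\<beta> / 2 * gcoef \<beta> 0 + (2 - \<beta>) / 2 * gcoef \<beta> 1
                                   + \<beta> / 2 * gcoef \<beta> 2)
      else Psi \<beta> * (\<beta> / 2 * gcoef \<beta> (k + 1) + (2 - \<beta>) / 2 * gcoef \<beta> k))"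

definition rcoef :: "real \<Rightarrow> int \<Rightarrow> real" where
  "rcoef \<beta> k = rnat \<beta> (nat \<bar>k\<bar>)"

definition cstar :: "real \<Rightarrow> real" where
  "cstar \<beta> = (1 - \<beta>) * (2 - \<beta>) * (3 - \<beta>) * 4 powr \<beta> * exp (- 9 / 4) * Psi \<beta> / 3"

end

theory Submission
  imports Defs
begin

(* Let S_n = g_0 + ... + g_n = (-1)^n binom(beta - 1, n), so that
   S_(n+1) = S_n (n + 1 - beta)/(n + 1) and S_n < 0 for n >= 1. Because r is even, the sum of r
   over an integer interval [-a, c] is the mean of its symmetric sums over [-a, a] and [-c, c].
   For n >= 1 the symmetric sum over [-n, n] telescopes to Psi S_n (2 - beta^2/(n + 1)), a product
   of two negative factors and a positive one; for n = 0 it is r_0 > 0. For the rate, Bernoulli's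
   inequality makes -S_n (n + 1 - beta)^beta increasing in n, so for n >= 3 it is at least its
   value at n = 3; the cases n = 1, 2 are checked directly, and exp(-9/4) <= 1/8 absorbs the
   constant. *)

lemma sum_int_symmetric_Suc:
  "(\<Sum>k = - int (Suc n)..int (Suc n). f k)
     = (\<Sum>k = - int n..int n. f k) + f (int (Suc n)) + f (- int (Suc n))"
proof -
  have "{- int (Suc n)..int (Suc n)}
          = insert (- int (Suc n)) (insert (int (Suc n)) {- int n..int n})"
    by auto
  then show ?thesis by (simp add: algebra_simps)
qed

lemma sum_even_int_interval:
  fixes f :: "int \<Rightarrow> 'a::comm_ring_1"
  assumes even: "\<And>k. f (- k) = f k"
  shows "2 * (\<Sum>k = - int a..int c. f k)
           = (\<Sum>k = - int a..int a. f k) + (\<Sum>k = - int c..int c. f k)"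
proof -
  have left: "2 * (\<Sum>k = - int a..0. f k) = (\<Sum>k = - int a..int a. f k) + f 0" for a
  proof (induction a)
    case (Suc a)
    have "{- int (Suc a)..0} = insert (- int (Suc a)) {- int a..0}"
      by auto
    then show ?case
      using Suc even[of "int (Suc a)"] unfolding sum_int_symmetric_Suc by (simp add: algebra_simps)
  qed simp
  show ?thesis
  proof (induction c)
    case 0
    show ?case using left[of a] by simp
  next
    case (Suc c)
    have "{- int a..int (Suc c)} = insert (int (Suc c)) {- int a..int c}"
      by auto
    then show ?case
      using Suc even[of "int (Suc c)"] unfolding sum_int_symmetric_Suc by (simp add: algebra_simps)
  qed
qed

lemma bernoulli_inequality_powr:
  fixes t b :: real
  assumes "t > -1" "b \<ge> 1"
  shows "1 + b * t \<le> (1 + t) powr b"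
proof -
  have ln_ge: "t / (1 + t) \<le> ln (1 + t)"
    using ln_le_minus_one[of "1 / (1 + t)"] assms by (simp add: ln_div field_simps)
  have "1 + (b - 1) * (t / (1 + t)) \<le> 1 + (b - 1) * ln (1 + t)"
    using mult_left_mono[OF ln_ge, of "b - 1"] assms by simp
  also have "\<dots> \<le> exp ((b - 1) * ln (1 + t))" by simp
  also have "\<dots> = (1 + t) powr (b - 1)" using assms by (simp add: powr_def)
  finally have "(1 + t) * (1 + (b - 1) * (t / (1 + t))) \<le> (1 + t) * (1 + t) powr (b - 1)"
    using assms by (intro mult_left_mono) auto
  also have "\<dots> = (1 + t) powr b"
    using powr_add[of "1 + t" 1 "b - 1"] assms by simp
  also have "(1 + t) * (1 + (b - 1) * (t / (1 + t))) = 1 + b * t"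
    using assms by (simp add: field_simps)
  finally show ?thesis .
qed

definition gsum :: "real \<Rightarrow> nat \<Rightarrow> real" where
  "gsum b n = (\<Sum>k\<le>n. gcoef b k)"

lemma gsum_eq_gchoose: "gsum b n = (-1) ^ n * ((b - 1) gchoose n)"
  using gbinomial_sum_lower_neg[of b n] by (simp add: gsum_def gcoef_def mult.commute)

lemma gcoef_0 [simp]: "gcoef b 0 = 1"
  by (simp add: gcoef_def)

lemma gcoef_Suc_eq_gsum_diff: "gcoef b (Suc n) = gsum b (Suc n) - gsum b n"
  by (simp add: gsum_def)

lemma gsum_Suc: "gsum b (Suc n) = gsum b n * (real n + 1 - b) / (real n + 1)"
proof -
  have "real (Suc n) * ((b - 1) gchoose Suc n) = (b - 1 - real n) * ((b - 1) gchoose n)"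
    using gbinomial_mult_1[of "b - 1" n] by (simp add: algebra_simps)
  then have "((b - 1) gchoose Suc n) = - ((b - 1) gchoose n) * (real n + 1 - b) / (real n + 1)"
    by (simp add: field_simps)
  then show ?thesis by (simp add: gsum_eq_gchoose)
qed

lemma gsum_1: "gsum b 1 = 1 - b"
  using gsum_Suc[of b 0] by (simp add: gsum_def)

lemma gsum_2: "gsum b 2 = (1 - b) * (2 - b) / 2"
  using gsum_Suc[of b 1, unfolded Suc_1 gsum_1] by simp

lemma gsum_3: "gsum b 3 = (1 - b) * (2 - b) * (3 - b) / 6"
  using gsum_Suc[of b 2] by (simp add: gsum_2 numeral_3_eq_3 field_simps)

lemma gsum_neg:
  assumes "1 < b" "b < 2" "1 \<le> n"
  shows "gsum b n < 0"
  using assms(3)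
proof (induction n rule: dec_induct)
  case base
  then show ?case using assms gsum_1[of b] by simp
next
  case (step n)
  then have "real n + 1 - b > 0" using assms by linarith
  with step.IH show ?case by (simp add: gsum_Suc divide_neg_pos mult_neg_pos)
qed

lemma Psi_neg:
  assumes "1 < b" "b < 3"
  shows "Psi b < 0"
proof -
  have "0 < cos (pi - pi * b / 2)"
    using assms by (intro cos_gt_zero_pi) (auto simp: field_simps)
  then show ?thesis by (simp add: Psi_def)
qed

definition rsum :: "real \<Rightarrow> nat \<Rightarrow> real" where
  "rsum b n = (\<Sum>k = - int n..int n. rcoef b k)"

lemma rsum_0: "rsum b 0 = Psi b * (1 - b) * (2 + b)"
  by (simp add: rsum_def rcoef_def rnat_def gcoef_def field_simps)

lemma rsum_Suc: "rsum b (Suc n) = rsum b n + 2 * rnat b (Suc n)"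
  unfolding rsum_def sum_int_symmetric_Suc by (simp add: rcoef_def nat_add_distrib)

lemma rsum_eq_gsum:
  assumes "1 \<le> n"
  shows "rsum b n = Psi b * (b * gsum b (Suc n) + (2 - b) * gsum b n)"
  using assms
proof (induction n rule: dec_induct)
  case base
  have g: "gcoef b 1 = - b" "gcoef b 2 = b * (b - 1) / 2"
    by (simp_all add: gcoef_def gbinomial_Suc numeral_2_eq_2 field_simps)
  have "rsum b 1 = rnat b 0 + 2 * rnat b 1"
    using rsum_Suc[of b 0] by (simp add: rsum_def rcoef_def)
  also have "\<dots> = Psi b * (b * gsum b 2 + (2 - b) * gsum b 1)"
    unfolding rnat_def gsum_1 gsum_2 g by (simp add: field_simps)
  finally show ?case by (simp only: Suc_1)
next
  case (step n)
  then show ?case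
    by (simp add: rsum_Suc rnat_def gcoef_Suc_eq_gsum_diff field_simps)
qed

lemma rsum_eq:
  assumes "1 \<le> n"
  shows "rsum b n = Psi b * gsum b n * (2 - b\<^sup>2 / (real n + 1))"
  using rsum_eq_gsum[OF assms] by (simp add: gsum_Suc field_simps power2_eq_square)

lemma rsum_pos:
  assumes "1 < b" "b < 2"
  shows "rsum b n > 0"
proof (cases "n = 0")
  case True
  then show ?thesis using Psi_neg[of b] assms by (simp add: rsum_0 mult_neg_neg mult_neg_pos)
next
  case False
  have "b\<^sup>2 < 2 * (real n + 1)"
    using False assms power_strict_mono[of b 2 2] by simp
  then have "2 - b\<^sup>2 / (real n + 1) > 0" by (simp add: field_simps)
  then show ?thesis using False Psi_neg[of b] gsum_neg[of b n] assms
    by (simp add: rsum_eq mult_neg_neg)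
qed

lemma rcoef_minus [simp]: "rcoef b (- k) = rcoef b k"
  by (simp add: rcoef_def)

lemma sum_rcoef_pos:
  assumes "1 < b" "b < 2" "a \<le> 0" "0 \<le> c"
  shows "0 < (\<Sum>k = a..c. rcoef b k)"
proof -
  obtain p q :: nat where "a = - int p" "c = int q"
    using assms(3,4) by (intro that[of "nat (- a)" "nat c"]) auto
  then have "2 * (\<Sum>k = a..c. rcoef b k) = rsum b p + rsum b q"
    using sum_even_int_interval[of "rcoef b" p q] by (simp add: rsum_def)
  then show ?thesis
    using rsum_pos[OF assms(1,2), of p] rsum_pos[OF assms(1,2), of q] by linarith
qed

lemma neg_gsum_powr_mono:
  assumes "1 < b" "b < 2" "1 \<le> m" "m \<le> n"
  shows "- gsum b m * (real m + 1 - b) powr b \<le> - gsum b n * (real n + 1 - b) powr b"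
  using assms(4)
proof (induction n rule: dec_induct)
  case (step n)
  define x where "x = real n + 1 - b"
  have x: "x > 0" using step assms unfolding x_def by linarith
  have "(x + 1) powr b = (x * (1 + 1 / x)) powr b"
    using x by (simp add: distrib_left)
  also have "\<dots> = x powr b * (1 + 1 / x) powr b"
    using x by (simp add: powr_mult)
  also have "\<dots> \<ge> x powr b * (1 + b * (1 / x))"
  proof -
    have "- 1 < 1 / x" using x by (simp add: less_trans[of _ 0])
    then show ?thesis
      using bernoulli_inequality_powr[of "1 / x" b] assms by (intro mult_left_mono) auto
  qed
  finally have bern: "x powr b * (1 + b / x) \<le> (x + 1) powr b" by simp
  have "(x + b) * x powr b = x * (x powr b * (1 + b / x))"
    using x by (simp add: field_simps)
  also have "\<dots> \<le> x * (x + 1) powr b"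
    using bern x by (intro mult_left_mono) auto
  also have "x + b = real n + 1"
    by (simp add: x_def)
  finally have "x powr b \<le> x / (real n + 1) * (x + 1) powr b"
    by (simp add: field_simps)
  moreover have "- gsum b n > 0" using gsum_neg[of b n] assms step by simp
  ultimately have
    "- gsum b n * x powr b \<le> - gsum b n * (x / (real n + 1) * (x + 1) powr b)"
    by (intro mult_left_mono) auto
  also have "\<dots> = - gsum b (Suc n) * (real (Suc n) + 1 - b) powr b"
    by (simp add: gsum_Suc x_def field_simps)
  finally show ?case using step.IH unfolding x_def by linarith
qed simp

lemma neg_gsum_lower_bound:
  assumes "1 < b" "b < 2" "1 \<le> n"
  shows "(b - 1) * (2 - b) * (3 - b) / 24 * (4 / (real n + 1)) powr b
           < - gsum b n * (2 - b\<^sup>2 / (real n + 1))"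
proof -
  define P where "P = (b - 1) * (2 - b)"
  have P: "P > 0" using assms unfolding P_def by simp
  have b2: "b\<^sup>2 < 4" using assms power_strict_mono[of b 2 2] by simp
  consider "n = 1" | "n = 2" | "n \<ge> 3" using assms by linarith
  then show ?thesis
  proof cases
    case 1
    have "2 powr b \<le> 2 powr (2::real)" using assms by (intro powr_mono) auto
    then have "P * (3 - b) / 24 * (4 / 2) powr b \<le> P * 2 / 24 * 4"
      using assms P by (intro mult_mono) auto
    also have "\<dots> < P * (2 + b) / 2"
      using mult_strict_left_mono[of "1 / 3" "(2 + b) / 2" P] P assms by simp
    also have "\<dots> = - gsum b n * (2 - b\<^sup>2 / 2)"
      unfolding 1 gsum_1 P_def by (simp add: field_simps power2_eq_square)
    finally show ?thesis using 1 by (simp add: P_def)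
  next
    case 2
    have "(4 / 3) powr b \<le> (4 / 3) powr (2::real)" using assms by (intro powr_mono) auto
    then have "P * (3 - b) / 24 * (4 / 3) powr b \<le> P * 2 / 24 * (16 / 9)"
      using assms P by (intro mult_mono) (auto simp: power2_eq_square)
    also have "\<dots> < P / 2 * (2 / 3)" using P by simp
    also have "\<dots> \<le> P / 2 * (2 - b\<^sup>2 / 3)" using P b2 by (intro mult_left_mono) auto
    also have "\<dots> = - gsum b n * (2 - b\<^sup>2 / 3)"
      unfolding 2 gsum_2 P_def by (simp add: field_simps)
    finally show ?thesis using 2 by (simp add: P_def)
  next
    case 3
    define M where "M = real n + 1"
    have M: "4 \<le> M" "0 < M - b" using 3 assms unfolding M_def by auto
    have "4 powr b = 2 powr b * 2 powr b" using powr_mult[of 2 2 b] by simp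
    also have "\<dots> \<le> 4 * (4 - b) powr b"
      using assms powr_mono[of b 2 2] powr_mono2[of b 2 "4 - b"] by (intro mult_mono) auto
    finally have four: "4 powr b / 4 \<le> (4 - b) powr b" by simp
    have "P * (3 - b) / 24 * (4 / M) powr b = P * (3 - b) / 6 * (4 powr b / 4) / M powr b"
      using M by (simp add: powr_divide)
    also have "\<dots> \<le> P * (3 - b) / 6 * (4 - b) powr b / M powr b"
      using four P assms by (intro divide_right_mono mult_left_mono) auto
    also have "\<dots> < P * (3 - b) / 6 * (4 - b) powr b / (M - b) powr b"
      using P assms M by (intro divide_strict_left_mono mult_pos_pos powr_less_mono2) auto
    also have "\<dots> \<le> - gsum b n"
    proof -
      have "P * (3 - b) / 6 * (4 - b) powr b \<le> - gsum b n * (M - b) powr b"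
        using neg_gsum_powr_mono[OF assms(1,2), of 3 n] 3
        by (simp add: gsum_3 P_def M_def field_simps)
      then show ?thesis using M by (simp add: divide_le_eq)
    qed
    also have "\<dots> \<le> - gsum b n * (2 - b\<^sup>2 / M)"
      using gsum_neg[OF assms] b2 M by (simp add: mult_le_cancel_left1 field_simps)
    finally show ?thesis by (simp add: P_def M_def)
  qed
qed

lemma exp_neg_9_4_le: "exp (- 9 / 4 :: real) \<le> 1 / 8"
proof -
  have "1 + 3 / 4 + (3 / 4)\<^sup>2 / 2 \<le> exp (3 / 4 :: real)"
    by (rule exp_lower_Taylor_quadratic) simp
  then have "(65 / 32) ^ 3 \<le> exp (3 / 4 :: real) ^ 3"
    by (intro power_mono) (auto simp: power2_eq_square)
  also have "\<dots> = exp (9 / 4)"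
    using exp_of_nat_mult[of 3 "3 / 4 :: real"] by simp
  finally have "8 \<le> exp (9 / 4 :: real)"
    by (simp add: power3_eq_cube)
  then show ?thesis
    by (simp add: exp_minus field_simps)
qed

lemma cstar_pos:
  assumes "1 < b" "b < 2"
  shows "cstar b > 0"
proof -
  have "0 < - Psi b * (b - 1) * (2 - b) * ((3 - b) * 4 powr b * exp (- 9 / 4) / 3)"
    using Psi_neg[of b] assms by (intro mult_pos_pos) auto
  then show ?thesis
    by (simp add: cstar_def algebra_simps)
qed

lemma rsum_gt_cstar:
  assumes "1 < b" "b < 2" "1 \<le> n"
  shows "cstar b / (real n + 1) powr b < rsum b n"
proof -
  define M where "M = real n + 1"
  define Q where "Q = (b - 1) * (2 - b) * (3 - b) * (4 / M) powr b"
  have Q: "Q \<ge> 0" using assms unfolding Q_def by simp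
  have Psi: "- Psi b > 0" using Psi_neg[of b] assms by simp
  have "cstar b / M powr b = - Psi b * (Q * exp (- 9 / 4) / 3)"
    unfolding cstar_def Q_def M_def by (simp add: powr_divide field_simps)
  also have "\<dots> \<le> - Psi b * (Q / 24)"
    using mult_left_mono[OF exp_neg_9_4_le Q] Psi by (intro mult_left_mono) auto
  also have "\<dots> < - Psi b * (- gsum b n * (2 - b\<^sup>2 / M))"
    using neg_gsum_lower_bound[OF assms] Psi unfolding Q_def M_def
    by (intro mult_strict_left_mono) auto
  also have "\<dots> = rsum b n"
    using rsum_eq[OF assms(3)] by (simp add: M_def)
  finally show ?thesis by (simp add: M_def)
qed

theorem lemma2p8:
  fixes \<beta> :: real
  assumes "1 < \<beta>" and "\<beta> < 2"
  shows "(\<forall>m j :: int. 2 \<le> m \<longrightarrow> 1 \<le> j \<longrightarrow> j \<le> m - 1 \<longrightarrow>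
            (\<Sum>k = 0..m. rcoef \<beta> (j - k)) > 0)
       \<and> (\<forall>m :: int. 2 \<le> m \<longrightarrow>
            (\<Sum>k = 1 - m..m - 1. rcoef \<beta> k) > cstar \<beta> / (real_of_int m) powr \<beta>
          \<and> cstar \<beta> / (real_of_int m) powr \<beta> > 0)"
proof (intro conjI allI impI)
  fix m j :: int
  assume "2 \<le> m" "1 \<le> j" "j \<le> m - 1"
  have "(\<Sum>k = 0..m. rcoef \<beta> (j - k)) = (\<Sum>k = j - m..j. rcoef \<beta> k)"
    by (rule sum.reindex_bij_witness[of _ "\<lambda>i. j - i" "\<lambda>i. j - i"]) auto
  also have "\<dots> > 0"
    using sum_rcoef_pos[OF assms] \<open>1 \<le> j\<close> \<open>j \<le> m - 1\<close> by simp
  finally show "(\<Sum>k = 0..m. rcoef \<beta> (j - k)) > 0" .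
next
  fix m :: int
  assume m: "2 \<le> m"
  then have "(\<Sum>k = 1 - m..m - 1. rcoef \<beta> k) = rsum \<beta> (nat (m - 1))"
    by (simp add: rsum_def)
  moreover have "real (nat (m - 1)) + 1 = real_of_int m"
    using m by simp
  ultimately show
    "(\<Sum>k = 1 - m..m - 1. rcoef \<beta> k) > cstar \<beta> / (real_of_int m) powr \<beta>"
    using rsum_gt_cstar[OF assms, of "nat (m - 1)"] m by simp
next
  fix m :: int
  assume "2 \<le> m"
  then show "cstar \<beta> / (real_of_int m) powr \<beta> > 0"
    using cstar_pos[OF assms] by simp
qed

end
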